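(* Assume $\alpha>\beta+1$, $\beta\ge0$, $\theta>0$, and $\alpha-\beta-1<\frac{4\theta}{\beta+1}$. Let $\rho\in\mathbb R$ and let $w$ be the solution on $[0,\infty)$ of $L(w)+e^{w}=0$, $w(0)=\rho$, $w'(0)=0$, and let $w^*(s)=\ln\{\theta^{\beta+1}(\alpha-\beta-1)\}-\theta\ln s$, $s>0$. Then for every $R>0$, $w-w^*$ has infinitely many zeros on $(R,+\infty)$ and only finitely many zeros on $(0,R]$. In particular $w-w^*$ has infinitely many zeros on $(0,\infty)$.
   Context: $L(u)(r)=r^{-\gamma}(r^{\alpha}|u'(r)|^{\beta}u'(r))'$ and $\theta=\gamma+2+\beta-\alpha$. The function $w^*$ is a singular solution of $L(w)+e^w=0$ on $(0,\infty)$. *)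

theory Defs
  imports "HOL-Analysis.Analysis"
begin

text \<open>The operator L(u)(r) = r^(-gamma) (r^alpha |u'(r)|^beta u'(r))'.\<close>

definition flux :: "real \<Rightarrow> real \<Rightarrow> (real \<Rightarrow> real) \<Rightarrow> real \<Rightarrow> real" where
  "flux \<alpha> \<beta> w' r = r powr \<alpha> * \<bar>w' r\<bar> powr \<beta> * w' r"

definition is_solution ::
  "real \<Rightarrow> real \<Rightarrow> real \<Rightarrow> real \<Rightarrow> (real \<Rightarrow> real) \<Rightarrow> bool" where
  "is_solution \<alpha> \<beta> \<gamma> \<rho> w \<longleftrightarrow>
     (\<exists>w'. (\<forall>r\<ge>0. (w has_real_derivative w' r) (at r within {0..}))
        \<and> continuous_on {0..} w'
        \<and> w 0 = \<rho> \<and> w' 0 = 0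
        \<and> (\<forall>r>0. (flux \<alpha> \<beta> w' has_real_derivative (- (r powr \<gamma> * exp (w r)))) (at r)))"

definition wstar :: "real \<Rightarrow> real \<Rightarrow> real \<Rightarrow> real \<Rightarrow> real" where
  "wstar \<alpha> \<beta> \<theta> s = ln (\<theta> powr (\<beta> + 1) * (\<alpha> - \<beta> - 1)) - \<theta> * ln s"

end

theory Submission
  imports Defs
begin

text \<open>
  In the variable t = ln s, with k = \<beta> + 1, a = \<alpha> - \<beta> - 1 and C = a \<theta>^k, the functions
  Z(t) = w(e^t) - w*(e^t), u(t) = -e^t w'(e^t) and v = \<theta>^k - u^k solve the autonomous system
  Z' = \<theta> - u, v' = -a v - C (e^Z - 1), whose rest point Z = 0, u = \<theta> is the singular solution w*.
  The energy C (e^Z - 1 - Z) + potential u decreases at the rate a (\<theta> - u) v \<ge> 0, and a Barbalat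
  argument drives every orbit to the rest point. The hypothesis a < 4\<theta>/k says that the
  linearisation there is a focus: while Z has no zero, the slope r = v/Z obeys a Riccati inequality
  r' \<le> -\<eta> (1 + r^2), which cannot hold on an interval longer than \<pi>/\<eta>. Zeros cannot accumulate
  at a finite t: at an accumulation point Z = Z' = 0, hence v = 0, whereas Gronwall's inequality for
  Z^2 + v^2 shows that the rest point is never reached in finite time. Finally Z < 0 near t = -\<infinity>,
  because w* tends to +\<infinity> at s = 0.
\<close>

lemma lipschitz_on_deriv_bound:
  fixes f f' :: "real \<Rightarrow> real"
  assumes "convex S" and "0 \<le> K"
    and "\<And>x. x \<in> S \<Longrightarrow> (f has_real_derivative f' x) (at x)"
    and "\<And>x. x \<in> S \<Longrightarrow> \<bar>f' x\<bar> \<le> K"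
  shows "K-lipschitz_on S f"
proof (rule lipschitz_onI)
  fix x y assume "x \<in> S" "y \<in> S"
  then show "dist (f x) (f y) \<le> K * dist x y"
    using field_differentiable_bound[OF assms(1), of f f' K x y] assms(3,4)
    by (simp add: dist_real_def has_field_derivative_at_within)
qed (fact assms(2))

text \<open>If f \<ge> \<epsilon> at arbitrarily late times, the Lipschitz bound keeps f \<ge> \<epsilon>/2 on windows of
  fixed length, each lowering the bounded-below function g by a fixed amount.\<close>

lemma lipschitz_dissipation_tendsto_zero:
  fixes g g' f :: "real \<Rightarrow> real"
  assumes g_deriv: "\<And>t. t \<ge> T \<Longrightarrow> (g has_real_derivative g' t) (at t)"
    and dissipation: "\<And>t. t \<ge> T \<Longrightarrow> g' t \<le> - f t"
    and f_nonneg: "\<And>t. t \<ge> T \<Longrightarrow> f t \<ge> 0"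
    and lip: "K-lipschitz_on {T..} f"
    and g_lower: "\<And>t. t \<ge> T \<Longrightarrow> g t \<ge> B"
  shows "(f \<longlongrightarrow> 0) at_top"
proof (rule tendstoI)
  fix \<epsilon> :: real assume "\<epsilon> > 0"
  define \<delta> where "\<delta> = \<epsilon> / (2 * (K + 1))"
  have K: "K \<ge> 0" using lipschitz_on_nonneg[OF lip] .
  have \<delta>: "\<delta> > 0" "K * \<delta> \<le> \<epsilon> / 2"
    using \<open>\<epsilon> > 0\<close> K by (auto simp: \<delta>_def field_simps)
  have g_antimono: "g y \<le> g x" if "T \<le> x" "x \<le> y" for x y
    using DERIV_nonpos_imp_nonincreasing[of x y g] that g_deriv dissipation f_nonneg
    by (metis order.trans neg_le_0_iff_le)
  define L where "L = Inf (g ` {T..})"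
  have bdd: "bdd_below (g ` {T..})" using g_lower by (auto intro!: bdd_belowI2)
  have L_le: "L \<le> g t" if "t \<ge> T" for t
    unfolding L_def using bdd that by (auto intro!: cInf_lower)
  obtain t0 where t0: "t0 \<ge> T" "g t0 < L + \<epsilon> * \<delta> / 2"
    using cInf_lessD[of "g ` {T..}" "L + \<epsilon> * \<delta> / 2"] \<open>\<epsilon> > 0\<close> \<delta>
    unfolding L_def by fastforce
  show "eventually (\<lambda>t. dist (f t) 0 < \<epsilon>) at_top"
    unfolding eventually_at_top_linorder
  proof (intro exI[of _ t0] allI impI, rule ccontr)
    fix t assume "t \<ge> t0" and "\<not> dist (f t) 0 < \<epsilon>"
    then have "t \<ge> T" "f t \<ge> \<epsilon>" using t0 f_nonneg[of t] by auto
    obtain z where z: "t < z" "z < t + \<delta>" "g (t + \<delta>) - g t = \<delta> * g' z"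
      using MVT2[of t "t + \<delta>" g g'] g_deriv \<open>t \<ge> T\<close> \<delta> by force
    have "\<bar>f z - f t\<bar> \<le> K * (z - t)"
      using lipschitz_onD[OF lip, of z t] z \<open>t \<ge> T\<close> by (simp add: dist_real_def)
    also have "\<dots> \<le> K * \<delta>" using z K by (intro mult_left_mono) auto
    finally have "f z \<ge> \<epsilon> / 2" using \<open>f t \<ge> \<epsilon>\<close> \<delta> by linarith
    then have "\<delta> * g' z \<le> \<delta> * - (\<epsilon> / 2)"
      using dissipation[of z] z \<open>t \<ge> T\<close> \<delta> by (intro mult_left_mono) auto
    moreover have "g t \<le> g t0" "L \<le> g (t + \<delta>)"
      using g_antimono L_le t0 \<open>t \<ge> t0\<close> \<open>t \<ge> T\<close> \<delta> by auto
    ultimately show False using t0 z by (simp add: algebra_simps)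
  qed
qed

lemma lipschitz_deriv_tendsto_zero:
  fixes g f :: "real \<Rightarrow> real"
  assumes g_deriv: "\<And>t. t \<ge> T \<Longrightarrow> (g has_real_derivative f t) (at t)"
    and g_lim: "(g \<longlongrightarrow> 0) at_top"
    and lip: "K-lipschitz_on {T..} f"
  shows "(f \<longlongrightarrow> 0) at_top"
proof (rule tendstoI)
  fix \<epsilon> :: real assume "\<epsilon> > 0"
  define \<delta> where "\<delta> = \<epsilon> / (2 * (K + 1))"
  have K: "K \<ge> 0" using lipschitz_on_nonneg[OF lip] .
  have \<delta>: "\<delta> > 0" "K * \<delta> \<le> \<epsilon> / 2"
    using \<open>\<epsilon> > 0\<close> K by (auto simp: \<delta>_def field_simps)
  obtain N where N: "\<And>t. t \<ge> N \<Longrightarrow> \<bar>g t\<bar> < \<epsilon> * \<delta> / 4"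
    using tendstoD[OF g_lim, of "\<epsilon> * \<delta> / 4"] \<open>\<epsilon> > 0\<close> \<delta>
    by (auto simp: eventually_at_top_linorder)
  show "eventually (\<lambda>t. dist (f t) 0 < \<epsilon>) at_top"
    unfolding eventually_at_top_linorder
  proof (intro exI[of _ "max N T"] allI impI, rule ccontr)
    fix t assume "t \<ge> max N T" and "\<not> dist (f t) 0 < \<epsilon>"
    then have "t \<ge> T" "t \<ge> N" "\<bar>f t\<bar> \<ge> \<epsilon>" by auto
    obtain z where z: "t < z" "z < t + \<delta>" "g (t + \<delta>) - g t = \<delta> * f z"
      using MVT2[of t "t + \<delta>" g f] g_deriv \<open>t \<ge> T\<close> \<delta> by force
    have "\<bar>f z - f t\<bar> \<le> K * (z - t)"
      using lipschitz_onD[OF lip, of z t] z \<open>t \<ge> T\<close> by (simp add: dist_real_def)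
    also have "\<dots> \<le> K * \<delta>" using z K by (intro mult_left_mono) auto
    finally have "\<bar>f z\<bar> \<ge> \<epsilon> / 2" using \<open>\<bar>f t\<bar> \<ge> \<epsilon>\<close> \<delta> by linarith
    then have "\<bar>g (t + \<delta>) - g t\<bar> \<ge> \<epsilon> * \<delta> / 2"
      using z(3) mult_left_mono[of "\<epsilon> / 2" "\<bar>f z\<bar>" \<delta>] \<delta> by (simp add: abs_mult)
    moreover have "\<bar>g (t + \<delta>)\<bar> < \<epsilon> * \<delta> / 4" "\<bar>g t\<bar> < \<epsilon> * \<delta> / 4"
      using N \<open>t \<ge> N\<close> \<delta> by auto
    ultimately show False by linarith
  qed
qed

lemma powr_diff_mean_value:
  fixes x y k :: real
  assumes "0 < x" "0 < y"
  obtains z where "min x y \<le> z" "z \<le> max x y"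
    "x powr k - y powr k = k * z powr (k - 1) * (x - y)"
proof -
  have mvt: "\<exists>z. a \<le> z \<and> z \<le> b \<and> b powr k - a powr k = k * z powr (k - 1) * (b - a)"
    if a_pos: "0 < a" and "a \<le> b" for a b
  proof (cases "a = b")
    case False
    then have "a < b" using that by simp
    moreover have "\<And>x. a \<le> x \<Longrightarrow> x \<le> b \<Longrightarrow>
        ((\<lambda>x. x powr k) has_real_derivative k * x powr (k - 1)) (at x)"
      using a_pos by (intro has_real_derivative_powr) auto
    ultimately obtain z where "a < z" "z < b" "b powr k - a powr k = (b - a) * (k * z powr (k - 1))"
      using MVT2[of a b "\<lambda>x. x powr k" "\<lambda>x. k * x powr (k - 1)"] by blast
    then show ?thesis by (intro exI[of _ z]) (simp add: mult.commute)
  qed auto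
  show ?thesis
  proof (cases "y \<le> x")
    case True
    then show ?thesis using mvt[of y x] assms that by auto
  next
    case False
    then obtain z where "x \<le> z" "z \<le> y" "y powr k - x powr k = k * z powr (k - 1) * (y - x)"
      using mvt[of x y] assms by auto
    then show ?thesis using that[of z] False by (auto simp: algebra_simps)
  qed
qed

lemma abs_powr_diff_le:
  fixes k M x y :: real
  assumes "k \<ge> 1" and "0 < x" "x \<le> M" and "0 < y" "y \<le> M"
  shows "\<bar>x powr k - y powr k\<bar> \<le> k * M powr (k - 1) * \<bar>x - y\<bar>"
proof -
  obtain z where z: "min x y \<le> z" "z \<le> max x y"
    and eq: "x powr k - y powr k = k * z powr (k - 1) * (x - y)"
    using powr_diff_mean_value[OF assms(2,4)] .
  have "z powr (k - 1) \<le> M powr (k - 1)"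
    using z assms by (intro powr_mono2) auto
  then show ?thesis
    unfolding eq using assms by (auto simp: abs_mult intro!: mult_right_mono)
qed

lemma abs_powr_diff_ge:
  fixes k m x y :: real
  assumes "k \<ge> 1" and "0 < m" "m \<le> x" "m \<le> y"
  shows "k * m powr (k - 1) * \<bar>x - y\<bar> \<le> \<bar>x powr k - y powr k\<bar>"
proof -
  obtain z where z: "min x y \<le> z" "z \<le> max x y"
    and eq: "x powr k - y powr k = k * z powr (k - 1) * (x - y)"
    using powr_diff_mean_value[of x y k] assms by auto
  have "m powr (k - 1) \<le> z powr (k - 1)"
    using z assms by (intro powr_mono2) auto
  then show ?thesis
    unfolding eq using assms by (auto simp: abs_mult intro!: mult_right_mono)
qed

lemma exp_minus_one_minus_self_ge: "\<bar>z\<bar> - 1 \<le> exp z - 1 - (z::real)"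
proof (cases "z \<ge> 0")
  case True
  have "(1 + z / 2) ^ 2 \<le> exp z"
    using exp_ge_one_plus_x_over_n_power_n[where x = z and n = 2] True by simp
  moreover have "z - 1 \<le> (1 + z / 2) ^ 2 - 1 - z"
    using zero_le_power2[of "z / 2 - 1"] by (simp add: power2_eq_square algebra_simps)
  ultimately show ?thesis using True by simp
next
  case False
  then show ?thesis using exp_gt_zero[of z] by simp
qed

lemma abs_exp_minus_one_le: "\<bar>exp z - 1\<bar> \<le> exp \<bar>z\<bar> * \<bar>z::real\<bar>"
proof (cases "z \<ge> 0")
  case True
  have "exp z * (1 - z) \<le> exp z * exp (- z)"
    using exp_ge_add_one_self[of "- z"] by (intro mult_left_mono) auto
  then show ?thesis using True by (simp add: exp_minus algebra_simps)
next
  case False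
  have "- z \<le> exp \<bar>z\<bar> * \<bar>z\<bar>"
    using mult_right_mono[of 1 "exp \<bar>z\<bar>" "\<bar>z\<bar>"] False by simp
  moreover have "\<bar>exp z - 1\<bar> = 1 - exp z" using False by simp
  ultimately show ?thesis using exp_ge_add_one_self[of z] by linarith
qed

definition diff_quot :: "(real \<Rightarrow> real) \<Rightarrow> real \<Rightarrow> real \<Rightarrow> real \<Rightarrow> real" where
  "diff_quot f c d x = (if x = c then d else (f x - f c) / (x - c))"

lemma diff_quot_mult: "f x - f c = diff_quot f c d x * (x - c)"
  by (simp add: diff_quot_def)

lemma isCont_diff_quot:
  assumes "(f has_real_derivative d) (at c)"
  shows "isCont (diff_quot f c d) c"
proof -
  have "((\<lambda>x. (f x - f c) / (x - c)) \<longlongrightarrow> d) (at c)"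
    using assms by (simp add: has_field_derivative_iff)
  then have "(diff_quot f c d \<longlongrightarrow> d) (at c)"
    by (rule Lim_transform_eventually)
      (simp add: eventually_at_filter diff_quot_def)
  then show ?thesis by (simp add: isCont_def diff_quot_def)
qed

definition exp_slope :: "real \<Rightarrow> real" where
  "exp_slope = diff_quot exp 0 1"

lemma exp_minus_one_eq_exp_slope: "exp z - 1 = exp_slope z * z"
  using diff_quot_mult[of exp z 0 1] by (simp add: exp_slope_def)

lemma exp_slope_tendsto: "(f \<longlongrightarrow> 0) F \<Longrightarrow> ((\<lambda>x. exp_slope (f x)) \<longlongrightarrow> 1) F"
  using isCont_tendsto_compose[OF isCont_diff_quot[OF DERIV_exp[of 0]]]
  by (simp add: exp_slope_def diff_quot_def)

lemma quadratic_uniformly_positive: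
  fixes a c C :: real
  assumes c: "0 < c" and C: "0 < C" and discr: "a\<^sup>2 < 4 * c * C"
  obtains \<eta> where "0 < \<eta>"
    "\<And>h b x. c - \<eta> \<le> h \<Longrightarrow> C - \<eta> \<le> b \<Longrightarrow> \<eta> * (1 + x\<^sup>2) \<le> h * x\<^sup>2 + a * x + b"
proof
  define D where "D = 4 * c * C - a\<^sup>2"
  define \<eta> where "\<eta> = min (min (c / 4) (C / 4)) (D / (16 * (c + C)))"
  have D: "D > 0" using discr by (simp add: D_def)
  show \<eta>: "0 < \<eta>" using c C D by (simp add: \<eta>_def)
  have "\<eta> \<le> c / 4" "\<eta> \<le> D / (16 * (c + C))"
    unfolding \<eta>_def by (simp_all add: min_def)
  then have A: "c - 2 * \<eta> > 0" and "8 * \<eta> * (c + C) \<le> D / 2"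
    using c C \<eta> by (auto simp: field_simps)
  moreover have "4 * (c - 2 * \<eta>) * (C - 2 * \<eta>) - a\<^sup>2 = D - 8 * \<eta> * (c + C) + 16 * \<eta>\<^sup>2"
    by (simp add: D_def power2_eq_square algebra_simps)
  ultimately have AB: "4 * (c - 2 * \<eta>) * (C - 2 * \<eta>) - a\<^sup>2 \<ge> 0"
    using D zero_le_power2[of \<eta>] by linarith
  fix h b x assume h: "c - \<eta> \<le> h" and b: "C - \<eta> \<le> b"
  have "4 * (c - 2 * \<eta>) * ((c - 2 * \<eta>) * x\<^sup>2 + a * x + (C - 2 * \<eta>))
      = (2 * (c - 2 * \<eta>) * x + a)\<^sup>2 + (4 * (c - 2 * \<eta>) * (C - 2 * \<eta>) - a\<^sup>2)"
    by (simp add: power2_eq_square algebra_simps)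
  also have "\<dots> \<ge> 0" using AB by simp
  finally have "(c - 2 * \<eta>) * x\<^sup>2 + a * x + (C - 2 * \<eta>) \<ge> 0"
    using A by (simp add: zero_le_mult_iff)
  moreover have "(c - \<eta>) * x\<^sup>2 \<le> h * x\<^sup>2" using h by (simp add: mult_right_mono)
  ultimately show "\<eta> * (1 + x\<^sup>2) \<le> h * x\<^sup>2 + a * x + b"
    using b by (simp add: algebra_simps)
qed

text \<open>arctan r decreases at least at rate \<eta> but ranges over an interval of length \<pi>.\<close>

lemma riccati_inequality_no_forward_solution:
  fixes r r' :: "real \<Rightarrow> real"
  assumes \<eta>: "0 < \<eta>"
    and r_deriv: "\<And>t. t \<ge> T \<Longrightarrow> (r has_real_derivative r' t) (at t)"
    and riccati: "\<And>t. t \<ge> T \<Longrightarrow> r' t \<le> - \<eta> * (1 + (r t)\<^sup>2)"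
  shows False
proof -
  define \<phi> where "\<phi> t = arctan (r t) + \<eta> * t" for t
  have \<phi>_deriv: "\<exists>y. (\<phi> has_real_derivative y) (at t) \<and> y \<le> 0" if "T \<le> t" for t
  proof -
    have d: "(\<phi> has_real_derivative inverse (1 + (r t)\<^sup>2) * r' t + \<eta>) (at t)"
      unfolding \<phi>_def[abs_def]
      by (rule DERIV_add[OF DERIV_chain2[OF DERIV_arctan r_deriv[OF that]] DERIV_cmult_Id])
    have pos: "1 + (r t)\<^sup>2 > 0" using zero_le_power2[of "r t"] by linarith
    have "inverse (1 + (r t)\<^sup>2) * r' t \<le> inverse (1 + (r t)\<^sup>2) * (- \<eta> * (1 + (r t)\<^sup>2))"
      using riccati[OF that] pos by (intro mult_left_mono) auto
    also have "\<dots> = - \<eta>" using pos by simp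
    finally show ?thesis using d by (intro exI[of _ "inverse (1 + (r t)\<^sup>2) * r' t + \<eta>"]) auto
  qed
  have "\<phi> (T + 4 / \<eta>) \<le> \<phi> T"
    using \<eta> \<phi>_deriv by (intro DERIV_nonpos_imp_nonincreasing[of T _ \<phi>]) auto
  then have "arctan (r (T + 4 / \<eta>)) + 4 \<le> arctan (r T)"
    using \<eta> by (simp add: \<phi>_def distrib_left)
  moreover have "- (pi / 2) < arctan (r (T + 4 / \<eta>))" "arctan (r T) < pi / 2"
    using arctan_bounded by auto
  ultimately show False using pi_less_4 by linarith
qed

lemma deriv_ge_linear_preserves_pos:
  fixes D D' :: "real \<Rightarrow> real"
  assumes "A \<le> B"
    and D_deriv: "\<And>t. t \<in> {A..B} \<Longrightarrow> (D has_real_derivative D' t) (at t)"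
    and lower: "\<And>t. t \<in> {A..B} \<Longrightarrow> - L * D t \<le> D' t"
    and "D A > 0"
  shows "D B > 0"
proof -
  define G where "G t = D t * exp (L * t)" for t
  have G_deriv: "\<exists>y. (G has_real_derivative y) (at t) \<and> 0 \<le> y" if "A \<le> t" "t \<le> B" for t
  proof -
    have "(D has_real_derivative D' t) (at t)" using D_deriv that by simp
    then have "(G has_real_derivative D' t * exp (L * t) + exp (L * t) * L * D t) (at t)"
      unfolding G_def[abs_def] by (rule DERIV_mult[OF _ DERIV_chain2[OF DERIV_exp DERIV_cmult_Id]])
    moreover have "0 \<le> (D' t + L * D t) * exp (L * t)"
      using lower[of t] that by simp
    ultimately show ?thesis
      by (intro exI[of _ "(D' t + L * D t) * exp (L * t)"]) (simp add: algebra_simps)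
  qed
  have "G A \<le> G B" using \<open>A \<le> B\<close> G_deriv by (intro DERIV_nonneg_imp_nondecreasing[of A B G]) auto
  moreover have "G A > 0" using \<open>D A > 0\<close> by (simp add: G_def)
  ultimately have "D B * exp (L * B) > 0" by (simp add: G_def)
  then show ?thesis by (simp add: zero_less_mult_iff)
qed

lemma infinite_zeros_imp_critical_zero:
  fixes f f' :: "real \<Rightarrow> real"
  assumes zeros: "infinite {t \<in> {A..B}. f t = 0}"
    and f_deriv: "\<And>t. (f has_real_derivative f' t) (at t)"
  obtains t0 where "t0 \<in> {A..B}" "f t0 = 0" "f' t0 = 0"
proof -
  define S where "S = {t \<in> {A..B}. f t = 0}"
  obtain t0 where t0: "t0 \<in> {A..B}" "t0 islimpt S"
    using compact_Icc[of A B] zeros unfolding compact_eq_Bolzano_Weierstrass S_def by blast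
  have "continuous_on UNIV f"
    using f_deriv by (meson DERIV_isCont continuous_at_imp_continuous_on)
  then have "closed {t. f t = 0}" by (intro closed_Collect_eq continuous_on_const)
  moreover have "t0 islimpt {t. f t = 0}" using t0(2) by (rule islimpt_subset) (auto simp: S_def)
  ultimately have "f t0 = 0" by (auto simp: closed_limpt)
  have "((\<lambda>y. (f y - f t0) / (y - t0)) \<longlongrightarrow> f' t0) (at t0 within S)"
    using has_field_derivative_at_within[OF f_deriv] by (simp add: has_field_derivative_iff)
  moreover have "((\<lambda>y. (f y - f t0) / (y - t0)) \<longlongrightarrow> 0) (at t0 within S)"
    by (rule Lim_transform_eventually[OF tendsto_const])
      (simp add: eventually_at_filter S_def \<open>f t0 = 0\<close>)
  moreover have "at t0 within S \<noteq> bot" using t0(2) trivial_limit_within by blast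
  ultimately have "f' t0 = 0" using tendsto_unique by blast
  with t0(1) \<open>f t0 = 0\<close> show ?thesis using that by blast
qed

section \<open>The Emden--Fowler system\<close>

locale emden_fowler_system =
  fixes a C \<theta> k :: real and Z v u :: "real \<Rightarrow> real"
  assumes a_pos: "a > 0" and theta_pos: "\<theta> > 0" and k_ge_1: "k \<ge> 1"
    and C_eq: "C = \<theta> powr k * a"
    and Z_deriv: "\<And>t. (Z has_real_derivative \<theta> - u t) (at t)"
    and v_ode: "\<And>t. (v has_real_derivative - a * v t - C * (exp (Z t) - 1)) (at t)"
    and u_pos: "\<And>t. u t > 0"
    and v_eq: "\<And>t. v t = \<theta> powr k - u t powr k"
begin

definition v' :: "real \<Rightarrow> real" where
  "v' t = - a * v t - C * (exp (Z t) - 1)"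

lemma v_deriv: "(v has_real_derivative v' t) (at t)"
  using v_ode by (simp add: v'_def)

lemma C_pos: "C > 0"
  using a_pos theta_pos by (simp add: C_eq)

definition power_slope :: "real \<Rightarrow> real" where
  "power_slope = diff_quot (\<lambda>x. x powr k) \<theta> (k * \<theta> powr (k - 1))"

lemma v_eq_power_slope: "v t = power_slope (u t) * (\<theta> - u t)"
  using diff_quot_mult[of "\<lambda>x. x powr k" "u t" \<theta> "k * \<theta> powr (k - 1)"]
  by (simp add: v_eq power_slope_def algebra_simps)

lemma power_slope_pos:
  assumes "x > 0"
  shows "power_slope x > 0"
proof (cases "x = \<theta>")
  case False
  obtain z where "min x \<theta> \<le> z" "x powr k - \<theta> powr k = k * z powr (k - 1) * (x - \<theta>)"
    using powr_diff_mean_value[OF assms theta_pos] by blast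
  then show ?thesis
    using False assms theta_pos k_ge_1 by (simp add: power_slope_def diff_quot_def)
qed (use k_ge_1 theta_pos in \<open>simp add: power_slope_def diff_quot_def\<close>)

lemma isCont_power_slope: "isCont power_slope \<theta>"
  unfolding power_slope_def
  by (rule isCont_diff_quot) (use has_real_derivative_powr[OF theta_pos] in simp)

lemma dissipation_nonneg: "(\<theta> - u t) * v t \<ge> 0"
proof -
  have "(\<theta> - u t) * v t = power_slope (u t) * (\<theta> - u t)\<^sup>2"
    by (simp add: v_eq_power_slope power2_eq_square)
  then show ?thesis using power_slope_pos[OF u_pos[of t]] by simp
qed

lemma u_eq: "u t = (\<theta> powr k - v t) powr (1 / k)"
  using u_pos[of t] k_ge_1 by (simp add: v_eq powr_powr)

lemma u_deriv: "(u has_real_derivative - (1 / k) * u t powr (1 - k) * v' t) (at t)"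
proof -
  have "\<theta> powr k - v t > 0" using u_pos[of t] by (simp add: v_eq)
  from DERIV_fun_powr[OF DERIV_diff[OF DERIV_const v_deriv] this, of "1 / k"]
  have "((\<lambda>t. (\<theta> powr k - v t) powr (1 / k)) has_real_derivative
      1 / k * (\<theta> powr k - v t) powr (1 / k - 1) * (0 - v' t)) (at t)" by simp
  moreover have "(\<theta> powr k - v t) powr (1 / k - 1) = u t powr (1 - k)"
    using u_pos[of t] k_ge_1 by (simp add: v_eq powr_powr algebra_simps)
  ultimately show ?thesis by (simp add: u_eq[abs_def, symmetric] algebra_simps)
qed

definition potential :: "real \<Rightarrow> real" where
  "potential x = k / (k + 1) * x powr (k + 1) - \<theta> * x powr k + \<theta> powr (k + 1) / (k + 1)"

lemma potential_deriv:
  assumes "x > 0"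
  shows "(potential has_real_derivative k * x powr (k - 1) * (x - \<theta>)) (at x)"
proof -
  have "(potential has_real_derivative
      k / (k + 1) * ((k + 1) * x powr (k + 1 - 1)) - \<theta> * (k * x powr (k - 1)) + 0) (at x)"
    unfolding potential_def[abs_def]
    by (intro DERIV_add DERIV_diff DERIV_cmult has_real_derivative_powr DERIV_const assms)
  moreover have "k / (k + 1) * ((k + 1) * x powr (k + 1 - 1)) = k * x powr (k - 1) * x"
    using assms k_ge_1 powr_add[of x "k - 1" 1] by simp
  ultimately show ?thesis by (simp add: algebra_simps)
qed

lemma potential_nonneg:
  assumes "x > 0"
  shows "potential x \<ge> 0"
proof -
  have "potential \<theta> = 0"
    using theta_pos k_ge_1 powr_add[of \<theta> k 1] by (simp add: potential_def field_simps)
  moreover have "potential \<theta> \<le> potential x"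
  proof (cases "\<theta> \<le> x")
    case True
    have "\<exists>d. (potential has_real_derivative d) (at y) \<and> 0 \<le> d" if "\<theta> \<le> y" for y
      using potential_deriv[of y] that theta_pos k_ge_1
      by (intro exI[of _ "k * y powr (k - 1) * (y - \<theta>)"]) simp
    then show ?thesis using True by (intro DERIV_nonneg_imp_nondecreasing[of \<theta> x potential]) auto
  next
    case False
    have "\<exists>d. (potential has_real_derivative d) (at y) \<and> d \<le> 0" if "x \<le> y" "y \<le> \<theta>" for y
      using potential_deriv[of y] that assms k_ge_1
      by (intro exI[of _ "k * y powr (k - 1) * (y - \<theta>)"]) (simp add: mult_nonneg_nonpos)
    then show ?thesis using False by (intro DERIV_nonpos_imp_nonincreasing[of x \<theta> potential]) auto
  qed
  ultimately show ?thesis by simp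
qed

lemma potential_coercive:
  obtains U where "\<And>x. U \<le> x \<Longrightarrow> x \<le> potential x"
proof
  fix x assume x: "(k + 1) * (\<theta> + 1) / k \<le> x"
  have "1 \<le> (k + 1) * (\<theta> + 1) / k"
    using k_ge_1 theta_pos by (simp add: field_simps)
  then have "1 \<le> x" using x by linarith
  have "\<theta> + 1 \<le> k / (k + 1) * x"
    using x k_ge_1 by (simp add: field_simps)
  then have "x \<le> x powr k * (k / (k + 1) * x - \<theta>)"
    using \<open>1 \<le> x\<close> powr_mono[of 1 k x] k_ge_1 mult_mono[of x "x powr k" 1 "k / (k + 1) * x - \<theta>"] by simp
  also have "\<dots> \<le> potential x"
    using \<open>1 \<le> x\<close> k_ge_1 powr_add[of x k 1] by (simp add: potential_def algebra_simps)
  finally show "x \<le> potential x" .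
qed

definition energy :: "real \<Rightarrow> real" where
  "energy t = C * (exp (Z t) - 1 - Z t) + potential (u t)"

lemma energy_deriv: "(energy has_real_derivative - a * ((\<theta> - u t) * v t)) (at t)"
proof -
  have "u t powr (k - 1) * u t powr (1 - k) = 1"
    using u_pos[of t] by (simp flip: powr_add)
  then have eq: "k * u t powr (k - 1) * (u t - \<theta>) * (- (1 / k) * u t powr (1 - k) * v' t)
      = (\<theta> - u t) * v' t"
    using k_ge_1 by (simp add: field_simps)
  have "((\<lambda>t. potential (u t)) has_real_derivative
      k * u t powr (k - 1) * (u t - \<theta>) * (- (1 / k) * u t powr (1 - k) * v' t)) (at t)"
    by (rule DERIV_chain2[OF potential_deriv[OF u_pos] u_deriv])
  then have "((\<lambda>t. potential (u t)) has_real_derivative (\<theta> - u t) * v' t) (at t)"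
    unfolding eq .
  then have "(energy has_real_derivative
      C * (exp (Z t) * (\<theta> - u t) - (\<theta> - u t)) + (\<theta> - u t) * v' t) (at t)"
    unfolding energy_def[abs_def] by (auto intro!: derivative_eq_intros Z_deriv)
  then show ?thesis by (simp add: v'_def algebra_simps)
qed

lemma energy_nonneg: "energy t \<ge> 0"
proof -
  have "exp (Z t) - 1 - Z t \<ge> 0" using exp_ge_add_one_self[of "Z t"] by linarith
  then show ?thesis
    using C_pos potential_nonneg[OF u_pos[of t]] by (simp add: energy_def)
qed

lemma energy_antimono:
  assumes "t \<le> s"
  shows "energy s \<le> energy t"
proof (rule DERIV_nonpos_imp_nonincreasing[OF assms])
  fix x
  show "\<exists>y. (energy has_real_derivative y) (at x) \<and> y \<le> 0"
    using energy_deriv a_pos dissipation_nonneg[of x] by (auto intro!: exI)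
qed

lemma bounded_forward:
  obtains M where "\<And>t. T \<le> t \<Longrightarrow> \<bar>Z t\<bar> \<le> M \<and> u t \<le> M \<and> \<bar>v t\<bar> \<le> M \<and> \<bar>v' t\<bar> \<le> M"
proof -
  obtain U where U: "\<And>x. U \<le> x \<Longrightarrow> x \<le> potential x" using potential_coercive by blast
  define MZ where "MZ = energy T / C + 1"
  define MU where "MU = max U (energy T)"
  define MV where "MV = \<theta> powr k + MU powr k"
  define MD where "MD = a * MV + C * (exp MZ + 1)"
  have "\<bar>Z t\<bar> \<le> MZ \<and> u t \<le> MU \<and> \<bar>v t\<bar> \<le> MV \<and> \<bar>v' t\<bar> \<le> MD" if "T \<le> t" for t
  proof (intro conjI)
    have "energy t \<le> energy T" using energy_antimono[OF that] .
    moreover have "0 \<le> exp (Z t) - 1 - Z t" using exp_ge_add_one_self[of "Z t"] by linarith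
    then have "0 \<le> C * (exp (Z t) - 1 - Z t)" using C_pos by simp
    ultimately have Z_energy: "C * (exp (Z t) - 1 - Z t) \<le> energy T"
      and u_energy: "potential (u t) \<le> energy T"
      using potential_nonneg[OF u_pos[of t]] unfolding energy_def[of t] by linarith+
    moreover have "C * (\<bar>Z t\<bar> - 1) \<le> C * (exp (Z t) - 1 - Z t)"
      using exp_minus_one_minus_self_ge[of "Z t"] C_pos by (intro mult_left_mono) auto
    ultimately show Z_le: "\<bar>Z t\<bar> \<le> MZ"
      using C_pos by (simp add: MZ_def field_simps)
    show u_le: "u t \<le> MU"
      using U[of "u t"] u_energy by (cases "U \<le> u t") (auto simp: MU_def)
    have "u t powr k \<le> MU powr k" using u_le u_pos[of t] k_ge_1 by (intro powr_mono2) auto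
    then show v_le: "\<bar>v t\<bar> \<le> MV"
      unfolding MV_def v_eq abs_le_iff
      using powr_ge_zero[of "u t" k] powr_ge_zero[of \<theta> k] powr_ge_zero[of MU k] by linarith
    have "exp (Z t) \<le> exp MZ" using Z_le by simp
    then have "\<bar>exp (Z t) - 1\<bar> \<le> exp MZ + 1" using exp_gt_zero[of "Z t"] by linarith
    then have "C * \<bar>exp (Z t) - 1\<bar> \<le> C * (exp MZ + 1)" using C_pos by simp
    moreover have "\<bar>v' t\<bar> \<le> a * \<bar>v t\<bar> + C * \<bar>exp (Z t) - 1\<bar>"
      using a_pos C_pos abs_triangle_ineq4[of "- a * v t" "C * (exp (Z t) - 1)"]
      by (simp add: v'_def abs_mult)
    ultimately have "\<bar>v' t\<bar> \<le> a * \<bar>v t\<bar> + C * (exp MZ + 1)" by linarith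
    moreover have "a * \<bar>v t\<bar> \<le> a * MV" using v_le a_pos by simp
    ultimately show "\<bar>v' t\<bar> \<le> MD" by (simp add: MD_def)
  qed
  then show ?thesis
    by (intro that[of "max (max MZ MU) (max MV MD)"]) fastforce
qed

lemma v'_deriv: "(v' has_real_derivative - a * v' t - C * exp (Z t) * (\<theta> - u t)) (at t)"
proof -
  have "(v' has_real_derivative - a * v' t - C * (exp (Z t) * (\<theta> - u t))) (at t)"
    unfolding v'_def[abs_def] by (auto intro!: derivative_eq_intros v_deriv Z_deriv simp: v'_def)
  then show ?thesis by (simp add: algebra_simps)
qed

lemma v_tendsto_zero: "(v \<longlongrightarrow> 0) at_top"
proof -
  obtain M where M: "\<And>t. 0 \<le> t \<Longrightarrow> \<bar>Z t\<bar> \<le> M \<and> u t \<le> M \<and> \<bar>v t\<bar> \<le> M \<and> \<bar>v' t\<bar> \<le> M"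
    using bounded_forward[of 0] by blast
  then have "M \<ge> 0" by force
  define L where "L = k * max \<theta> M powr (k - 1)"
  have L: "L > 0" using k_ge_1 theta_pos by (simp add: L_def)
  have v_sq_le: "(v t)\<^sup>2 \<le> L * ((\<theta> - u t) * v t)" if "0 \<le> t" for t
  proof -
    have "\<bar>v t\<bar> \<le> L * \<bar>\<theta> - u t\<bar>"
      unfolding v_eq L_def using M[OF that] theta_pos u_pos[of t] k_ge_1
      by (intro abs_powr_diff_le) auto
    from mult_right_mono[OF this abs_ge_zero[of "v t"]]
    have "(v t)\<^sup>2 \<le> L * \<bar>\<theta> - u t\<bar> * \<bar>v t\<bar>" by (simp add: power2_eq_square)
    also have "\<dots> = L * ((\<theta> - u t) * v t)"
      using dissipation_nonneg[of t] by (simp add: abs_mult[symmetric] mult.assoc)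
    finally show ?thesis .
  qed
  define f where "f t = a / L * (v t)\<^sup>2" for t
  have f_deriv: "(f has_real_derivative a / L * (2 * v t * v' t)) (at t)" for t
    unfolding f_def[abs_def] using L by (auto intro!: derivative_eq_intros v_deriv)
  have lip: "(a / L * (2 * M * M))-lipschitz_on {0..} f"
  proof (rule lipschitz_on_deriv_bound[OF _ _ f_deriv])
    show "\<bar>a / L * (2 * v t * v' t)\<bar> \<le> a / L * (2 * M * M)" if "t \<in> {0..}" for t
    proof -
      have "\<bar>v t\<bar> * \<bar>v' t\<bar> \<le> M * M" using M[of t] that by (intro mult_mono) auto
      then show ?thesis using a_pos L by (simp add: abs_mult divide_right_mono)
    qed
  qed (use a_pos L \<open>M \<ge> 0\<close> in auto)
  have "(f \<longlongrightarrow> 0) at_top"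
  proof (rule lipschitz_dissipation_tendsto_zero[where g = energy, OF energy_deriv _ _ lip energy_nonneg])
    show "- a * ((\<theta> - u t) * v t) \<le> - f t" if "0 \<le> t" for t
      using mult_left_mono[OF v_sq_le[OF that], of "a / L"] a_pos L by (simp add: f_def)
    show "0 \<le> f t" for t using a_pos L by (simp add: f_def)
  qed
  then have "((\<lambda>t. L / a * f t) \<longlongrightarrow> L / a * 0) at_top" by (rule tendsto_mult_left)
  then have "((\<lambda>t. (v t)\<^sup>2) \<longlongrightarrow> 0) at_top" using a_pos L by (simp add: f_def)
  then have "((\<lambda>t. sqrt ((v t)\<^sup>2)) \<longlongrightarrow> sqrt 0) at_top" by (rule tendsto_real_sqrt)
  then show ?thesis by (simp add: tendsto_rabs_zero_iff)
qed

lemma v'_tendsto_zero: "(v' \<longlongrightarrow> 0) at_top"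
proof -
  obtain M where M: "\<And>t. 0 \<le> t \<Longrightarrow> \<bar>Z t\<bar> \<le> M \<and> u t \<le> M \<and> \<bar>v t\<bar> \<le> M \<and> \<bar>v' t\<bar> \<le> M"
    using bounded_forward[of 0] by blast
  define K where "K = a * M + C * exp M * (\<theta> + M)"
  have "\<bar>- a * v' t - C * exp (Z t) * (\<theta> - u t)\<bar> \<le> K" if "t \<in> {0..}" for t
  proof -
    have "\<bar>\<theta> - u t\<bar> \<le> \<theta> + M" and "exp (Z t) \<le> exp M"
      using M[of t] that u_pos[of t] theta_pos by (auto simp: abs_le_iff)
    then have "C * exp (Z t) * \<bar>\<theta> - u t\<bar> \<le> C * exp M * (\<theta> + M)"
      using C_pos by (intro mult_mono) auto
    moreover have "a * \<bar>v' t\<bar> \<le> a * M" using M[of t] that a_pos by simp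
    moreover have "\<bar>- a * v' t - C * exp (Z t) * (\<theta> - u t)\<bar>
        \<le> a * \<bar>v' t\<bar> + C * exp (Z t) * \<bar>\<theta> - u t\<bar>"
      using abs_triangle_ineq4[of "- a * v' t" "C * exp (Z t) * (\<theta> - u t)"] a_pos C_pos
      by (simp add: abs_mult)
    ultimately show ?thesis by (simp add: K_def)
  qed
  moreover have "M \<ge> 0" using M[of 0] by force
  then have "K \<ge> 0" using a_pos C_pos theta_pos by (simp add: K_def)
  ultimately have "K-lipschitz_on {0..} v'"
    by (intro lipschitz_on_deriv_bound[OF _ _ v'_deriv]) auto
  then show ?thesis
    by (rule lipschitz_deriv_tendsto_zero[OF v_deriv v_tendsto_zero])
qed

lemma Z_tendsto_zero: "(Z \<longlongrightarrow> 0) at_top"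
proof -
  have "((\<lambda>t. 1 - (v' t + a * v t) / C) \<longlongrightarrow> 1 - (0 + a * 0) / C) at_top"
    using C_pos by (intro tendsto_intros v'_tendsto_zero v_tendsto_zero) auto
  moreover have "1 - (v' t + a * v t) / C = exp (Z t)" for t
    using C_pos by (simp add: v'_def field_simps)
  ultimately have "((\<lambda>t. ln (exp (Z t))) \<longlongrightarrow> ln 1) at_top"
    by (intro tendsto_ln) auto
  then show ?thesis by simp
qed

lemma u_tendsto_theta: "(u \<longlongrightarrow> \<theta>) at_top"
proof -
  have "((\<lambda>t. (\<theta> powr k - v t) powr (1 / k)) \<longlongrightarrow> (\<theta> powr k - 0) powr (1 / k)) at_top"
    using theta_pos by (intro tendsto_intros v_tendsto_zero) auto
  then show ?thesis
    using theta_pos k_ge_1 by (simp add: u_eq[abs_def, symmetric] powr_powr)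
qed

lemma Z_v_ratio_deriv:
  assumes "Z t \<noteq> 0"
  shows "((\<lambda>t. v t / Z t) has_real_derivative
    - (1 / power_slope (u t) * (v t / Z t)\<^sup>2 + a * (v t / Z t) + C * exp_slope (Z t))) (at t)"
proof -
  have "power_slope (u t) \<noteq> 0" using power_slope_pos[OF u_pos[of t]] by simp
  have "v' t = - a * v t - C * exp_slope (Z t) * Z t"
    by (simp add: v'_def exp_minus_one_eq_exp_slope)
  moreover have "\<theta> - u t = v t / power_slope (u t)"
    using v_eq_power_slope[of t] \<open>power_slope (u t) \<noteq> 0\<close> by simp
  ultimately have "(v' t * Z t - v t * (\<theta> - u t)) / (Z t * Z t)
      = - (1 / power_slope (u t) * (v t / Z t)\<^sup>2 + a * (v t / Z t) + C * exp_slope (Z t))"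
    using assms \<open>power_slope (u t) \<noteq> 0\<close>
    by (simp only:) (simp add: field_simps power2_eq_square)
  with DERIV_divide[OF v_deriv Z_deriv assms] show ?thesis by simp
qed

lemma inverse_power_slope_tendsto:
  "((\<lambda>t. 1 / power_slope (u t)) \<longlongrightarrow> 1 / (k * \<theta> powr (k - 1))) at_top"
proof -
  have "power_slope \<theta> = k * \<theta> powr (k - 1)" by (simp add: power_slope_def diff_quot_def)
  moreover have "isCont (\<lambda>x. 1 / power_slope x) \<theta>"
    using power_slope_pos[OF theta_pos] by (intro continuous_intros isCont_power_slope) auto
  ultimately show ?thesis using isCont_tendsto_compose[OF _ u_tendsto_theta] by fastforce
qed

lemma infinitely_many_zeros:
  assumes focus: "a < 4 * \<theta> / k"
  shows "infinite {t. T < t \<and> Z t = 0}"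
proof
  assume "finite {t. T < t \<and> Z t = 0}"
  then obtain N where "\<forall>t \<in> {t. T < t \<and> Z t = 0}. t \<le> N"
    by (meson bdd_above_def bdd_above_finite)
  then have Z_nonzero: "Z t \<noteq> 0" if "max T N < t" for t
    using that by force
  define c where "c = 1 / (k * \<theta> powr (k - 1))"
  have c: "c > 0" using k_ge_1 theta_pos by (simp add: c_def)
  have "4 * c * C = a * (4 * \<theta> / k)"
    using k_ge_1 theta_pos powr_add[of \<theta> 1 "k - 1"] by (simp add: c_def C_eq field_simps)
  moreover have "a * a < a * (4 * \<theta> / k)" using mult_strict_left_mono[OF focus a_pos] .
  ultimately have "a\<^sup>2 < 4 * c * C" by (simp add: power2_eq_square)
  then obtain \<eta> where \<eta>: "0 < \<eta>" and quadratic: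
    "\<And>h b x. c - \<eta> \<le> h \<Longrightarrow> C - \<eta> \<le> b \<Longrightarrow> \<eta> * (1 + x\<^sup>2) \<le> h * x\<^sup>2 + a * x + b"
    using quadratic_uniformly_positive[OF c C_pos] by blast
  have "((\<lambda>t. C * exp_slope (Z t)) \<longlongrightarrow> C * 1) at_top"
    by (intro tendsto_mult_left exp_slope_tendsto Z_tendsto_zero)
  with inverse_power_slope_tendsto
  have "eventually (\<lambda>t. c - \<eta> < 1 / power_slope (u t) \<and> C - \<eta> < C * exp_slope (Z t)) at_top"
    using \<eta> unfolding c_def[symmetric] by (intro eventually_conj order_tendstoD(1)) auto
  then obtain T' where T': "\<And>t. T' \<le> t \<Longrightarrow>
      c - \<eta> < 1 / power_slope (u t) \<and> C - \<eta> < C * exp_slope (Z t)"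
    by (auto simp: eventually_at_top_linorder)
  show False
  proof (rule riccati_inequality_no_forward_solution[OF \<eta>, of "max (max T N) T' + 1"])
    fix t assume "max (max T N) T' + 1 \<le> t"
    then have "max T N < t" "T' \<le> t"
      using max.cobounded1[of "max T N" T'] max.cobounded2[of "max T N" T'] by linarith+
    show "((\<lambda>t. v t / Z t) has_real_derivative
        - (1 / power_slope (u t) * (v t / Z t)\<^sup>2 + a * (v t / Z t) + C * exp_slope (Z t))) (at t)"
      using Z_v_ratio_deriv Z_nonzero[OF \<open>max T N < t\<close>] .
    show "- (1 / power_slope (u t) * (v t / Z t)\<^sup>2 + a * (v t / Z t) + C * exp_slope (Z t))
        \<le> - \<eta> * (1 + (v t / Z t)\<^sup>2)"
      using quadratic[of "1 / power_slope (u t)" "C * exp_slope (Z t)" "v t / Z t"]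
        T'[OF \<open>T' \<le> t\<close>] by simp
  qed
qed

lemma rest_distance_deriv_ge:
  assumes m: "0 < m" "m \<le> u t" "m \<le> \<theta>" and M: "\<bar>Z t\<bar> \<le> M"
  shows "- (1 / (k * m powr (k - 1)) + 2 * a + C * exp M) * ((Z t)\<^sup>2 + (v t)\<^sup>2)
    \<le> 2 * Z t * (\<theta> - u t) + 2 * v t * v' t"
proof -
  define c where "c = 1 / (k * m powr (k - 1))"
  define D where "D = (Z t)\<^sup>2 + (v t)\<^sup>2"
  have c: "c > 0" using m k_ge_1 by (simp add: c_def)
  have two_Z_v: "2 * \<bar>Z t\<bar> * \<bar>v t\<bar> \<le> D"
    using sum_squares_bound[of "\<bar>Z t\<bar>" "\<bar>v t\<bar>"] by (simp add: D_def)
  have "k * m powr (k - 1) * \<bar>\<theta> - u t\<bar> \<le> \<bar>v t\<bar>"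
    unfolding v_eq using m k_ge_1 by (intro abs_powr_diff_ge) auto
  then have "\<bar>\<theta> - u t\<bar> \<le> c * \<bar>v t\<bar>" using m k_ge_1 by (simp add: c_def field_simps)
  from mult_left_mono[OF this, of "2 * \<bar>Z t\<bar>"]
  have "\<bar>2 * Z t * (\<theta> - u t)\<bar> \<le> 2 * \<bar>Z t\<bar> * (c * \<bar>v t\<bar>)"
    by (simp add: abs_mult)
  also have "\<dots> = c * (2 * \<bar>Z t\<bar> * \<bar>v t\<bar>)" by simp
  also have "\<dots> \<le> c * D" using two_Z_v c by simp
  finally have Z_term: "\<bar>2 * Z t * (\<theta> - u t)\<bar> \<le> c * D" .
  have "exp \<bar>Z t\<bar> * \<bar>Z t\<bar> \<le> exp M * \<bar>Z t\<bar>"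
    using M by (intro mult_right_mono) auto
  then have "\<bar>exp (Z t) - 1\<bar> \<le> exp M * \<bar>Z t\<bar>"
    using abs_exp_minus_one_le[of "Z t"] by linarith
  moreover have "\<bar>2 * v t * (C * (exp (Z t) - 1))\<bar> = 2 * C * \<bar>v t\<bar> * \<bar>exp (Z t) - 1\<bar>"
    using C_pos by (simp add: abs_mult)
  ultimately have "\<bar>2 * v t * (C * (exp (Z t) - 1))\<bar> \<le> 2 * C * \<bar>v t\<bar> * (exp M * \<bar>Z t\<bar>)"
    using C_pos by (simp add: mult_left_mono)
  also have "\<dots> = C * exp M * (2 * \<bar>Z t\<bar> * \<bar>v t\<bar>)" by simp
  also have "\<dots> \<le> C * exp M * D" using two_Z_v C_pos by simp
  finally have exp_term: "\<bar>2 * v t * (C * (exp (Z t) - 1))\<bar> \<le> C * exp M * D" .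
  have "2 * a * (v t)\<^sup>2 \<le> 2 * a * D" using a_pos by (simp add: D_def)
  then show ?thesis
    using Z_term exp_term unfolding c_def[symmetric] D_def[symmetric] v'_def
    by (simp add: abs_le_iff algebra_simps power2_eq_square)
qed

lemma rest_point_unreachable:
  assumes "A \<le> B" and "Z B = 0" and "v B = 0"
  shows "Z A = 0"
proof (rule ccontr)
  assume "Z A \<noteq> 0"
  have "continuous_on {A..B} u" "continuous_on {A..B} (\<lambda>t. \<bar>Z t\<bar>)"
    using DERIV_isCont[OF u_deriv] DERIV_isCont[OF Z_deriv]
    by (auto intro!: continuous_at_imp_continuous_on continuous_intros)
  then obtain t1 t2 where t1: "\<And>t. t \<in> {A..B} \<Longrightarrow> u t1 \<le> u t"
    and t2: "\<And>t. t \<in> {A..B} \<Longrightarrow> \<bar>Z t\<bar> \<le> \<bar>Z t2\<bar>"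
    using continuous_attains_inf[of "{A..B}" u] continuous_attains_sup[of "{A..B}" "\<lambda>t. \<bar>Z t\<bar>"]
      \<open>A \<le> B\<close> by (metis atLeastAtMost_iff compact_Icc empty_iff order_refl)
  have "(\<lambda>t. (Z t)\<^sup>2 + (v t)\<^sup>2) B > 0"
  proof (rule deriv_ge_linear_preserves_pos[OF \<open>A \<le> B\<close>])
    show "((\<lambda>t. (Z t)\<^sup>2 + (v t)\<^sup>2) has_real_derivative 2 * Z t * (\<theta> - u t) + 2 * v t * v' t) (at t)" for t
      by (auto intro!: derivative_eq_intros Z_deriv v_deriv)
    show "- (1 / (k * min (u t1) \<theta> powr (k - 1)) + 2 * a + C * exp \<bar>Z t2\<bar>) * ((Z t)\<^sup>2 + (v t)\<^sup>2)
        \<le> 2 * Z t * (\<theta> - u t) + 2 * v t * v' t" if "t \<in> {A..B}" for t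
      using t1[OF that] t2[OF that] u_pos[of t1] theta_pos
      by (intro rest_distance_deriv_ge) auto
    show "(Z A)\<^sup>2 + (v A)\<^sup>2 > 0" using \<open>Z A \<noteq> 0\<close> by (simp add: add_pos_nonneg)
  qed
  then show False using assms by simp
qed

lemma finitely_many_zeros_below:
  assumes below: "\<And>t. t \<le> A \<Longrightarrow> Z t < 0"
  shows "finite {t. t \<le> B \<and> Z t = 0}"
proof (rule ccontr)
  assume "infinite {t. t \<le> B \<and> Z t = 0}"
  moreover have "{t. t \<le> B \<and> Z t = 0} \<subseteq> {t \<in> {A..B}. Z t = 0}"
  proof
    fix t assume t: "t \<in> {t. t \<le> B \<and> Z t = 0}"
    then have "\<not> t \<le> A" using below[of t] by auto
    with t show "t \<in> {t \<in> {A..B}. Z t = 0}" by simp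
  qed
  ultimately have "infinite {t \<in> {A..B}. Z t = 0}" using finite_subset by blast
  then obtain t0 where t0: "t0 \<in> {A..B}" "Z t0 = 0" "\<theta> - u t0 = 0"
    using infinite_zeros_imp_critical_zero[of A B Z "\<lambda>t. \<theta> - u t"] Z_deriv by blast
  then have "v t0 = 0" by (simp add: v_eq)
  with t0 have "Z A = 0" by (intro rest_point_unreachable[of A t0]) auto
  then show False using below[of A] by simp
qed

end

section \<open>Radial solutions\<close>

lemma flux_tendsto_zero_at_0:
  fixes w' :: "real \<Rightarrow> real"
  assumes "\<alpha> > 0" and "\<beta> \<ge> 0" and "continuous_on {0..} w'"
  shows "(flux \<alpha> \<beta> w' \<longlongrightarrow> 0) (at_right 0)"
proof -
  have "compact (w' ` {0..1})"
    using assms(3) by (intro compact_continuous_image) (auto intro: continuous_on_subset)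
  then obtain K where K: "\<And>r. r \<in> {0..1} \<Longrightarrow> \<bar>w' r\<bar> \<le> K"
    by (fastforce dest: compact_imp_bounded simp: bounded_real)
  have "((\<lambda>r. r powr \<alpha>) \<longlongrightarrow> 0) (at_right 0)"
  proof (rule tendsto_zero_powrI[OF tendsto_ident_at tendsto_const _ assms(1)])
    show "eventually (\<lambda>r. 0 \<le> r) (at_right (0::real))"
      by (rule eventually_at_rightI[of 0 1]) auto
  qed
  moreover have "eventually (\<lambda>r. norm (flux \<alpha> \<beta> w' r) \<le> norm (r powr \<alpha>) * (K powr \<beta> * K)) (at_right 0)"
  proof (rule eventually_at_rightI[of 0 1])
    fix r :: real assume r: "r \<in> {0<..<1}"
    then have "\<bar>w' r\<bar> powr \<beta> * \<bar>w' r\<bar> \<le> K powr \<beta> * K"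
      using K[of r] assms(2) by (intro mult_mono powr_mono2) auto
    then show "norm (flux \<alpha> \<beta> w' r) \<le> norm (r powr \<alpha>) * (K powr \<beta> * K)"
      using r by (simp add: flux_def abs_mult mult_left_mono)
  qed simp
  ultimately show ?thesis by (rule tendsto_0_le)
qed

lemma flux_negative:
  fixes w w' :: "real \<Rightarrow> real"
  assumes "\<alpha> > 0" and "\<beta> \<ge> 0" and "continuous_on {0..} w'"
    and flux_deriv: "\<And>r. r > 0 \<Longrightarrow> (flux \<alpha> \<beta> w' has_real_derivative - (r powr \<gamma> * exp (w r))) (at r)"
    and "s > 0"
  shows "flux \<alpha> \<beta> w' s < 0"
proof -
  have "\<exists>d. (flux \<alpha> \<beta> w' has_real_derivative d) (at r) \<and> d < 0" if "0 < r" for r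
    using flux_deriv[OF that] by (intro exI[of _ "- (r powr \<gamma> * exp (w r))"]) (simp add: that less_imp_neq[symmetric])
  then have decreasing: "flux \<alpha> \<beta> w' y < flux \<alpha> \<beta> w' x" if "0 < x" "x < y" for x y
    using that by (intro DERIV_neg_imp_decreasing[of x y]) auto
  have "flux \<alpha> \<beta> w' (s / 2) \<le> 0"
  proof (rule tendsto_lowerbound[OF flux_tendsto_zero_at_0[OF assms(1-3)]])
    show "eventually (\<lambda>r. flux \<alpha> \<beta> w' (s / 2) \<le> flux \<alpha> \<beta> w' r) (at_right 0)"
      using \<open>s > 0\<close> decreasing by (intro eventually_at_rightI[of 0 "s / 2"]) (auto intro: less_imp_le)
  qed simp
  then show ?thesis using decreasing[of "s / 2" s] \<open>s > 0\<close> by simp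
qed


corollary deriv_negative:
  fixes w w' :: "real \<Rightarrow> real"
  assumes "\<alpha> > 0" and "\<beta> \<ge> 0" and "continuous_on {0..} w'"
    and "\<And>r. r > 0 \<Longrightarrow> (flux \<alpha> \<beta> w' has_real_derivative - (r powr \<gamma> * exp (w r))) (at r)"
    and "s > 0"
  shows "w' s < 0"
proof (rule ccontr)
  assume "\<not> w' s < 0"
  then have "flux \<alpha> \<beta> w' s \<ge> 0" using \<open>s > 0\<close> by (simp add: flux_def)
  with flux_negative[OF assms] show False by simp
qed

lemma exp_flux_eq:
  fixes w' :: "real \<Rightarrow> real"
  assumes "w' (exp t) < 0"
  shows "exp (- (\<alpha> - \<beta> - 1) * t) * flux \<alpha> \<beta> w' (exp t)
    = - ((- exp t * w' (exp t)) powr (\<beta> + 1))"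
proof -
  define q where "q = - w' (exp t)"
  have q: "q > 0" using assms by (simp add: q_def)
  have "w' (exp t) = - q" "\<bar>w' (exp t)\<bar> = q" using q by (auto simp: q_def)
  then have "flux \<alpha> \<beta> w' (exp t) = exp t powr \<alpha> * (q powr \<beta> * q) * - 1"
    by (simp add: flux_def)
  also have "\<dots> = - (exp (\<alpha> * t) * q powr (\<beta> + 1))"
    using q by (simp add: powr_add) (simp add: powr_def)
  finally have "flux \<alpha> \<beta> w' (exp t) = - (exp (\<alpha> * t) * q powr (\<beta> + 1))" .
  moreover have "exp (- (\<alpha> - \<beta> - 1) * t) * exp (\<alpha> * t) = exp ((\<beta> + 1) * t)"
    by (simp flip: exp_add) (simp add: algebra_simps)
  moreover have "(exp t * q) powr (\<beta> + 1) = exp ((\<beta> + 1) * t) * q powr (\<beta> + 1)"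
    using q by (simp add: powr_def ln_mult distrib_left exp_add)
  ultimately show ?thesis by (simp add: q_def)
qed

lemma is_solution_continuous_on:
  assumes "is_solution \<alpha> \<beta> \<gamma> \<rho> w"
  shows "continuous_on {0..} w"
  using assms by (auto simp: is_solution_def intro: DERIV_continuous_on)


lemma emden_fowler_transform:
  fixes \<alpha> \<beta> \<gamma> \<theta> \<rho> :: real and w :: "real \<Rightarrow> real"
  assumes theta_eq: "\<theta> = \<gamma> + 2 + \<beta> - \<alpha>" and "\<alpha> > \<beta> + 1" and "\<beta> \<ge> 0" and "\<theta> > 0"
    and sol: "is_solution \<alpha> \<beta> \<gamma> \<rho> w"
  obtains u v where "emden_fowler_system (\<alpha> - \<beta> - 1) (\<theta> powr (\<beta> + 1) * (\<alpha> - \<beta> - 1)) \<theta> (\<beta> + 1)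
    (\<lambda>t. w (exp t) - wstar \<alpha> \<beta> \<theta> (exp t)) v u"
proof -
  obtain w' where w_deriv: "\<And>r. r \<ge> 0 \<Longrightarrow> (w has_real_derivative w' r) (at r within {0..})"
    and w'_cont: "continuous_on {0..} w'"
    and flux_deriv: "\<And>r. r > 0 \<Longrightarrow> (flux \<alpha> \<beta> w' has_real_derivative - (r powr \<gamma> * exp (w r))) (at r)"
    using sol unfolding is_solution_def by blast
  define a where "a = \<alpha> - \<beta> - 1"
  define k where "k = \<beta> + 1"
  define C where "C = \<theta> powr k * a"
  define Z where "Z t = w (exp t) - wstar \<alpha> \<beta> \<theta> (exp t)" for t
  define u where "u t = - (exp t * w' (exp t))" for t
  define v where "v t = \<theta> powr k - u t powr k" for t
  have a: "a > 0" using assms(2) by (simp add: a_def)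
  then have C: "C > 0" using \<open>\<theta> > 0\<close> by (simp add: C_def)
  have w'_neg: "w' r < 0" if "r > 0" for r
    using assms(2,3) by (intro deriv_negative[OF _ _ w'_cont flux_deriv that]) auto
  have u_pos: "u t > 0" for t using w'_neg[of "exp t"] by (simp add: u_def mult_pos_neg)
  have Z_eq: "Z t = w (exp t) + \<theta> * t - ln C" for t
    by (simp add: Z_def wstar_def C_def a_def k_def)
  have Z_deriv: "(Z has_real_derivative \<theta> - u t) (at t)" for t
  proof -
    have "(w has_real_derivative w' (exp t)) (at (exp t))"
      using w_deriv[of "exp t"] at_within_interior[of "exp t" "{0..}"] by simp
    from DERIV_chain2[OF this DERIV_exp]
    have "((\<lambda>t. w (exp t) + \<theta> * t - ln C) has_real_derivative w' (exp t) * exp t + \<theta> - 0) (at t)"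
      by (intro DERIV_diff DERIV_add DERIV_cmult_Id DERIV_const)
    then show ?thesis by (simp add: Z_eq[abs_def] u_def algebra_simps)
  qed
  have v_flux: "v t = \<theta> powr k + exp (- a * t) * flux \<alpha> \<beta> w' (exp t)" for t
    using exp_flux_eq[of w' t \<alpha> \<beta>] w'_neg[of "exp t"] by (simp add: v_def u_def a_def k_def)
  have v_deriv: "(v has_real_derivative - a * v t - C * (exp (Z t) - 1)) (at t)" for t
  proof -
    have "((\<lambda>t. \<theta> powr k + exp (- a * t) * flux \<alpha> \<beta> w' (exp t)) has_real_derivative
        exp (- a * t) * (- a) * flux \<alpha> \<beta> w' (exp t)
        - exp (- a * t) * (exp t powr \<gamma> * exp (w (exp t)) * exp t)) (at t)"
      by (auto intro!: derivative_eq_intros DERIV_chain2[OF flux_deriv] simp: algebra_simps)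
    moreover have "exp (- a * t) * (exp t powr \<gamma> * exp (w (exp t)) * exp t) = exp (w (exp t) + \<theta> * t)"
      by (simp add: powr_def flip: exp_add) (simp add: theta_eq a_def algebra_simps)
    moreover have "C * exp (Z t) = exp (w (exp t) + \<theta> * t)"
      using C by (simp add: Z_eq exp_diff)
    ultimately show ?thesis
      by (simp add: v_flux[abs_def] C_def algebra_simps)
  qed
  show thesis
    by (rule that[of v u], unfold_locales)
      (use a \<open>\<theta> > 0\<close> \<open>\<beta> \<ge> 0\<close> Z_deriv v_deriv u_pos in \<open>auto simp: Z_def[abs_def] a_def k_def C_def v_def\<close>)
qed

lemma below_wstar_near_zero:
  fixes w :: "real \<Rightarrow> real"
  assumes "continuous_on {0..} w" and "\<theta> > 0"
  obtains A where "\<And>t. t \<le> A \<Longrightarrow> w (exp t) < wstar \<alpha> \<beta> \<theta> (exp t)"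
proof -
  define c where "c = ln (\<theta> powr (\<beta> + 1) * (\<alpha> - \<beta> - 1))"
  have "compact (w ` {0..1})"
    using assms(1) by (intro compact_continuous_image) (auto intro: continuous_on_subset)
  then obtain M where M: "\<And>s. s \<in> {0..1} \<Longrightarrow> \<bar>w s\<bar> \<le> M"
    by (fastforce dest: compact_imp_bounded simp: bounded_real)
  show ?thesis
  proof (rule that[of "min 0 ((c - M) / \<theta> - 1)"])
    fix t assume t: "t \<le> min 0 ((c - M) / \<theta> - 1)"
    then have "w (exp t) \<le> M" using M[of "exp t"] by simp
    moreover have "\<theta> * t \<le> c - M - \<theta>"
      using t mult_left_mono[of t "(c - M) / \<theta> - 1" \<theta>] \<open>\<theta> > 0\<close> by (simp add: field_simps)
    ultimately show "w (exp t) < wstar \<alpha> \<beta> \<theta> (exp t)"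
      using \<open>\<theta> > 0\<close> by (simp add: wstar_def c_def)
  qed
qed

lemma Collect_pos_eq_exp_image: "{s :: real. 0 < s \<and> P s} = exp ` {t. P (exp t)}"
proof
  show "{s. 0 < s \<and> P s} \<subseteq> exp ` {t. P (exp t)}"
  proof
    fix s assume "s \<in> {s. 0 < s \<and> P s}"
    then show "s \<in> exp ` {t. P (exp t)}" by (intro image_eqI[of s exp "ln s"]) auto
  qed
qed auto

lemma Collect_gt_eq_exp_image:
  fixes R :: real
  assumes "R > 0"
  shows "{s. R < s \<and> P s} = exp ` {t. ln R < t \<and> P (exp t)}"
proof -
  have "{s. R < s \<and> P s} = {s. 0 < s \<and> R < s \<and> P s}" using assms by auto
  then show ?thesis
    using Collect_pos_eq_exp_image[of "\<lambda>s. R < s \<and> P s"] ln_less_cancel_iff[OF assms exp_gt_zero]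
    by simp
qed

lemma Collect_le_eq_exp_image:
  fixes R :: real
  assumes "R > 0"
  shows "{s. 0 < s \<and> s \<le> R \<and> P s} = exp ` {t. t \<le> ln R \<and> P (exp t)}"
  using Collect_pos_eq_exp_image[of "\<lambda>s. s \<le> R \<and> P s"] ln_le_cancel_iff[OF exp_gt_zero assms]
  by simp

lemma finite_exp_image_iff: "finite (exp ` A) \<longleftrightarrow> finite (A :: real set)"
  by (rule finite_image_iff) (simp add: inj_on_def)

theorem theorem4p1:
  fixes \<alpha> \<beta> \<gamma> \<theta> \<rho> :: real and w :: "real \<Rightarrow> real"
  assumes theta_def: "\<theta> = \<gamma> + 2 + \<beta> - \<alpha>"
    and "\<alpha> > \<beta> + 1" and "\<beta> \<ge> 0" and "\<theta> > 0"
    and "\<alpha> - \<beta> - 1 < 4 * \<theta> / (\<beta> + 1)"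
    and sol: "is_solution \<alpha> \<beta> \<gamma> \<rho> w"
  shows "(\<forall>R>0. infinite {s. R < s \<and> w s = wstar \<alpha> \<beta> \<theta> s}
                 \<and> finite {s. 0 < s \<and> s \<le> R \<and> w s = wstar \<alpha> \<beta> \<theta> s})
         \<and> infinite {s. 0 < s \<and> w s = wstar \<alpha> \<beta> \<theta> s}"
proof -
  define Z where "Z t = w (exp t) - wstar \<alpha> \<beta> \<theta> (exp t)" for t
  obtain u v where "emden_fowler_system (\<alpha> - \<beta> - 1) (\<theta> powr (\<beta> + 1) * (\<alpha> - \<beta> - 1)) \<theta> (\<beta> + 1) Z v u"
    using emden_fowler_transform[OF assms(1-4) sol] unfolding Z_def[abs_def] .
  then interpret emden_fowler_system "\<alpha> - \<beta> - 1" "\<theta> powr (\<beta> + 1) * (\<alpha> - \<beta> - 1)" \<theta> "\<beta> + 1" Z v u .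
  obtain A where "\<And>t. t \<le> A \<Longrightarrow> w (exp t) < wstar \<alpha> \<beta> \<theta> (exp t)"
    using below_wstar_near_zero[OF is_solution_continuous_on[OF sol] \<open>\<theta> > 0\<close>] by blast
  then have Z_neg: "\<And>t. t \<le> A \<Longrightarrow> Z t < 0" by (simp add: Z_def)
  have zeros: "infinite {s. R < s \<and> w s = wstar \<alpha> \<beta> \<theta> s}
      \<and> finite {s. 0 < s \<and> s \<le> R \<and> w s = wstar \<alpha> \<beta> \<theta> s}" if "R > 0" for R
    unfolding Collect_gt_eq_exp_image[OF that] Collect_le_eq_exp_image[OF that] finite_exp_image_iff
    using infinitely_many_zeros[of "ln R"] assms(5) finitely_many_zeros_below[where B = "ln R", OF Z_neg]
    by (simp add: Z_def)
  moreover have "{s. 1 < s \<and> w s = wstar \<alpha> \<beta> \<theta> s} \<subseteq> {s. 0 < s \<and> w s = wstar \<alpha> \<beta> \<theta> s}"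
    by auto
  then have "infinite {s. 0 < s \<and> w s = wstar \<alpha> \<beta> \<theta> s}"
    using zeros[of 1] finite_subset by auto
  ultimately show ?thesis by blast
qed

end
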